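(* Let $\mathbf{L}=\{\mathbf{b}_1,\dots,\mathbf{b}_r\}+\mathbb{N}(\mathbf{F})\subseteq\mathbb{N}^n$ with $\mathbf{F}$ finite, such that $(\mathbf{b}_i+\mathbb{N}(\mathbf{F}))\cap(\mathbf{b}_j+\mathbb{N}(\mathbf{F}))\neq\emptyset$ for all $i,j$ (so $\mathbf{L}$ is directed hybridlinear), and let $\mathbf{x}\in\mathbf{L}$. Then $\dim\big(\mathbf{L}\setminus(\mathbf{x}+\mathbb{N}(\mathbf{F}))\big)<\dim(\mathbf{L})$.
   Context: $\mathbb{N}(\mathbf{F})$: finite $\mathbb{N}$-linear combinations of $\mathbf{F}$. Dimension of $\mathbf{X}\subseteq\mathbb{Q}^n$: the least $k\in\mathbb{N}$ such that $\mathbf{X}\subseteq\bigcup_{i=1}^r(\mathbf{c}_i+\mathbf{V}_i)$ for finitely many $\mathbf{c}_i\in\mathbb{Q}^n$ and vector subspaces $\mathbf{V}_i$ of dimension $\le k$. *)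

theory Defs
  imports "HOL-Analysis.Analysis"
begin

definition qscale :: "rat \<Rightarrow> rat ^ 'n \<Rightarrow> rat ^ 'n" where
  "qscale c v = (\<chi> i. c * v $ i)"

definition natcomb :: "(nat ^ 'n) set \<Rightarrow> (nat ^ 'n) set" where
  "natcomb F = {y. \<exists>c :: nat ^ 'n \<Rightarrow> nat. y = (\<Sum>f\<in>F. (\<chi> i. c f * f $ i))}"

definition ratvec :: "nat ^ 'n \<Rightarrow> rat ^ 'n" where
  "ratvec x = (\<chi> i. of_nat (x $ i))"

definition has_dim_at_most :: "(rat ^ 'n) set \<Rightarrow> nat \<Rightarrow> bool" where
  "has_dim_at_most X k \<longleftrightarrow> (\<exists>I. finite I \<and>
      (\<forall>p\<in>I. module.subspace qscale (snd p) \<and> vector_space.dim qscale (snd p) \<le> k) \<and>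
      X \<subseteq> (\<Union>p\<in>I. (\<lambda>v. fst p + v) ` snd p))"

definition setdim :: "(rat ^ 'n) set \<Rightarrow> int" where
  "setdim X = (if X = {} then -1 else int (LEAST k. has_dim_at_most X k))"

definition natdim :: "(nat ^ 'n) set \<Rightarrow> int" where
  "natdim X = setdim (ratvec ` X)"

end

(*
  Let d = dim span F. A finite union of affine subspaces of dimension < d cannot contain a
  translate x + N(F): some v in N(F) lies outside all their (proper) linear parts, and then the
  integer points x + t v of a line avoid them all. As L lies in finitely many translates of
  span F, dim L = d.

  By directedness, every b in B has some u_b in N(F) with b + u_b + N(F) contained in
  x + N(F). If S is a subset of F spanning span F, clearing denominators shows that every
  combination of F whose coefficients on S all exceed a common bound K lies in u_b + N(F). Hence
  for a point b + sum a_f f of L outside x + N(F), the generators T with a_f < K leave a set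
  F - T that does not span span F, and the point lies in b + sum_{f in T} a_f f + span (F - T):
  one of finitely many translates of subspaces of dimension < d.
*)
theory Submission
  imports Defs
begin

lemma qscale_eq_vector_scalar_mult: "qscale = (*s)"
  by (intro ext) (simp add: qscale_def vector_scalar_mult_def)

lemma has_dim_at_most_iff:
  "has_dim_at_most X k \<longleftrightarrow> (\<exists>I. finite I \<and>
      (\<forall>p\<in>I. vec.subspace (snd p) \<and> vec.dim (snd p) \<le> k) \<and>
      X \<subseteq> (\<Union>p\<in>I. (\<lambda>v. fst p + v) ` snd p))"
  by (simp add: has_dim_at_most_def qscale_eq_vector_scalar_mult)

definition lincomb :: "(nat ^ 'n \<Rightarrow> nat) \<Rightarrow> (nat ^ 'n) set \<Rightarrow> nat ^ 'n" where
  "lincomb c F = (\<Sum>f\<in>F. c f *s f)"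

lemma natcomb_eq_range_lincomb: "natcomb F = range (\<lambda>c. lincomb c F)"
  by (auto simp: natcomb_def lincomb_def vector_scalar_mult_def)

lemma lincomb_in_natcomb [intro, simp]: "lincomb c F \<in> natcomb F"
  by (simp add: natcomb_eq_range_lincomb)

lemma lincomb_add: "lincomb (\<lambda>f. c f + d f) F = lincomb c F + lincomb d F"
  by (simp add: lincomb_def vec_eq_iff algebra_simps sum.distrib)

lemma lincomb_split:
  "finite F \<Longrightarrow> T \<subseteq> F \<Longrightarrow> lincomb c F = lincomb c T + lincomb c (F - T)"
  by (simp add: lincomb_def sum.subset_diff add.commute)

lemma lincomb_cong: "(\<And>f. f \<in> F \<Longrightarrow> c f = d f) \<Longrightarrow> lincomb c F = lincomb d F"
  by (simp add: lincomb_def)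

lemma zero_in_natcomb [simp]: "0 \<in> natcomb F"
  using lincomb_in_natcomb[of "\<lambda>_. 0" F] by (simp add: lincomb_def vec_eq_iff)

lemma natcomb_add: "u \<in> natcomb F \<Longrightarrow> v \<in> natcomb F \<Longrightarrow> u + v \<in> natcomb F"
  by (auto simp: natcomb_eq_range_lincomb lincomb_add[symmetric])

lemma natcomb_scale: "v \<in> natcomb F \<Longrightarrow> t *s v \<in> natcomb F"
proof -
  have "t *s lincomb c F = lincomb (\<lambda>f. t * c f) F" for c
    by (simp add: lincomb_def vec_eq_iff sum_distrib_left algebra_simps)
  then show "v \<in> natcomb F \<Longrightarrow> t *s v \<in> natcomb F"
    by (auto simp: natcomb_eq_range_lincomb)
qed

lemma generator_in_natcomb: "finite F \<Longrightarrow> g \<in> F \<Longrightarrow> g \<in> natcomb F"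
proof -
  have "(\<lambda>f. (if f = g then 1 else 0) *s f) = (\<lambda>f. if f = g then g else 0)"
    by (auto simp: fun_eq_iff vec_eq_iff)
  then have "lincomb (\<lambda>f. if f = g then 1 else 0) F = g" if "finite F" "g \<in> F"
    using that unfolding lincomb_def by (simp only:) simp
  then show "finite F \<Longrightarrow> g \<in> F \<Longrightarrow> g \<in> natcomb F"
    by (metis lincomb_in_natcomb)
qed

lemma natcomb_induct [consumes 2, case_names zero add generator]:
  assumes "finite F" "w \<in> natcomb F"
    and "P 0" "\<And>u v. P u \<Longrightarrow> P v \<Longrightarrow> P (u + v)" "\<And>f. f \<in> F \<Longrightarrow> P f"
  shows "P w"
proof -
  have multiple: "P (t *s f)" if "f \<in> F" for f t
  proof (induction t)
    case (Suc t)
    have "Suc t *s f = t *s f + f"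
      by (simp add: vec_eq_iff)
    then show ?case
      using assms(4)[OF Suc assms(5)[OF that]] by simp
  qed (use assms(3) in \<open>simp add: vec_eq_iff\<close>)
  have "P (\<Sum>f\<in>A. c f *s f)" if "A \<subseteq> F" for A c
    using finite_subset[OF that assms(1)] that
    by (induction A rule: finite_induct) (auto simp: assms(3,4) multiple)
  then show ?thesis
    using assms(2) by (auto simp: natcomb_eq_range_lincomb lincomb_def)
qed

lemma ratvec_add: "ratvec (u + v) = ratvec u + ratvec v"
  by (simp add: ratvec_def vec_eq_iff)

lemma ratvec_zero [simp]: "ratvec 0 = 0"
  by (simp add: ratvec_def vec_eq_iff)

lemma ratvec_scale: "ratvec (t *s v) = of_nat t *s ratvec v"
  by (simp add: ratvec_def vec_eq_iff)

lemma ratvec_sum: "ratvec (\<Sum>f\<in>A. g f) = (\<Sum>f\<in>A. ratvec (g f))"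
  by (induction A rule: infinite_finite_induct) (auto simp: ratvec_add)

lemma ratvec_lincomb: "ratvec (lincomb c F) = (\<Sum>f\<in>F. of_nat (c f) *s ratvec f)"
  by (simp add: lincomb_def ratvec_sum ratvec_scale)

lemma inj_ratvec: "inj ratvec"
  by (auto simp: inj_on_def ratvec_def vec_eq_iff)

lemma ratvec_natcomb_in_span: "v \<in> natcomb F \<Longrightarrow> ratvec v \<in> vec.span (ratvec ` F)"
proof -
  have "ratvec (lincomb c F) \<in> vec.span (ratvec ` F)" for c
    unfolding ratvec_lincomb by (intro vec.span_sum vec.span_scale vec.span_base imageI)
  then show "v \<in> natcomb F \<Longrightarrow> ratvec v \<in> vec.span (ratvec ` F)"
    by (auto simp: natcomb_eq_range_lincomb)
qed

lemma translate_mem_iff: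
  fixes c y :: "'a :: ab_group_add"
  shows "y \<in> (\<lambda>v. c + v) ` W \<longleftrightarrow> y - c \<in> W"
  by (auto intro: image_eqI[where x = "y - c"])

lemma line_in_subspace_if_two_points:
  fixes p u :: "rat ^ 'n" and s t :: nat
  assumes "vec.subspace W" "p + of_nat s *s u \<in> W" "p + of_nat t *s u \<in> W" "s \<noteq> t"
  shows "u \<in> W" "p \<in> W"
proof -
  have "(p + of_nat s *s u) - (p + of_nat t *s u) \<in> W"
    using assms(1-3) by (rule vec.subspace_diff)
  then have "(of_nat s - of_nat t) *s u \<in> W"
    by (simp add: vec_eq_iff algebra_simps)
  then have "inverse (of_nat s - of_nat t :: rat) *s ((of_nat s - of_nat t) *s u) \<in> W"
    by (rule vec.subspace_scale[OF assms(1)])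
  then show "u \<in> W"
    using assms(4) by (simp only: vector_smult_assoc) simp
  then have "p + of_nat s *s u - of_nat s *s u \<in> W"
    using assms(1,2) by (intro vec.subspace_diff vec.subspace_scale)
  then show "p \<in> W"
    by simp
qed

text \<open>A line not contained in an affine subspace meets it at most once.\<close>
lemma line_nat_point_outside_affine_subspaces:
  fixes p u :: "rat ^ 'n"
  assumes "finite I"
    and "\<And>c W. (c, W) \<in> I \<Longrightarrow> vec.subspace W \<and> \<not> (p - c \<in> W \<and> u \<in> W)"
  shows "\<exists>t::nat. \<forall>(c, W)\<in>I. p + of_nat t *s u \<notin> (\<lambda>v. c + v) ` W"
proof -
  define hits where "hits c W = {t::nat. p - c + of_nat t *s u \<in> W}" for c W
  have "finite (hits c W)" if "(c, W) \<in> I" for c W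
  proof (cases "hits c W = {}")
    case False
    then obtain s where "s \<in> hits c W" by blast
    with line_in_subspace_if_two_points[of W "p - c" s u] assms(2)[OF that]
    have "hits c W \<subseteq> {s}"
      unfolding hits_def by blast
    then show ?thesis
      using finite_subset by blast
  qed simp
  then have "finite (\<Union>(c, W)\<in>I. hits c W)"
    using assms(1) by auto
  then obtain t where "t \<notin> (\<Union>(c, W)\<in>I. hits c W)"
    using ex_new_if_finite[OF infinite_UNIV_nat] by blast
  then show ?thesis
    by (auto simp: hits_def translate_mem_iff algebra_simps)
qed

lemma natcomb_avoids_subspaces:
  assumes "finite F" "finite \<W>"
    and "\<And>W. W \<in> \<W> \<Longrightarrow> vec.subspace W \<and> \<not> ratvec ` F \<subseteq> W"
  shows "\<exists>v\<in>natcomb F. \<forall>W\<in>\<W>. ratvec v \<notin> W"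
  using assms(2,3)
proof (induction \<W> rule: finite_induct)
  case (insert W \<W>)
  then obtain v where v: "v \<in> natcomb F" "\<forall>W'\<in>\<W>. ratvec v \<notin> W'"
    by auto
  from insert.prems obtain g where g: "g \<in> F" "ratvec g \<notin> W"
    by blast
  have "\<exists>t::nat. \<forall>(c, W')\<in>Pair 0 ` insert W \<W>.
          ratvec v + of_nat t *s ratvec g \<notin> (\<lambda>w. c + w) ` W'"
    using insert.prems v(2) g(2) insert.hyps(1)
    by (intro line_nat_point_outside_affine_subspaces) auto
  then obtain t where t: "\<forall>W'\<in>insert W \<W>. ratvec (v + t *s g) \<notin> W'"
    by (auto simp: ratvec_add ratvec_scale)
  moreover have "v + t *s g \<in> natcomb F"
    using natcomb_add[OF v(1) natcomb_scale[OF generator_in_natcomb[OF assms(1) g(1)]]] .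
  ultimately show ?case
    by blast
qed auto

lemma dim_span_le_if_translate_natcomb_subset:
  assumes "finite F" "(\<lambda>v. x + v) ` natcomb F \<subseteq> X" "has_dim_at_most (ratvec ` X) k"
  shows "vec.dim (ratvec ` F) \<le> k"
proof (rule ccontr)
  assume large: "\<not> ?thesis"
  from assms(3) obtain I where I: "finite I" "\<forall>p\<in>I. vec.subspace (snd p) \<and> vec.dim (snd p) \<le> k"
    "ratvec ` X \<subseteq> (\<Union>p\<in>I. (\<lambda>v. fst p + v) ` snd p)"
    unfolding has_dim_at_most_iff by blast
  have "\<not> ratvec ` F \<subseteq> W" if "W \<in> snd ` I" for W
    using vec.dim_subset[of "ratvec ` F" W] I(2) that large by fastforce
  with I obtain v where v: "v \<in> natcomb F" "\<forall>W\<in>snd ` I. ratvec v \<notin> W"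
    using natcomb_avoids_subspaces[OF assms(1), of "snd ` I"] by blast
  have "\<exists>t::nat. \<forall>(c, W)\<in>I. ratvec x + of_nat t *s ratvec v \<notin> (\<lambda>w. c + w) ` W"
    using I v(2) by (intro line_nat_point_outside_affine_subspaces) force+
  then obtain t where "\<forall>p\<in>I. ratvec (x + t *s v) \<notin> (\<lambda>w. fst p + w) ` snd p"
    by (fastforce simp: ratvec_add ratvec_scale)
  moreover have "x + t *s v \<in> X"
    using assms(2) natcomb_scale[OF v(1)] by blast
  ultimately show False
    using I(3) by blast
qed

lemma translate_natcomb_subset:
  assumes "x \<in> (\<lambda>v. b + v) ` natcomb F"
  shows "(\<lambda>v. x + v) ` natcomb F \<subseteq> (\<lambda>v. b + v) ` natcomb F"
proof
  fix y assume "y \<in> (\<lambda>v. x + v) ` natcomb F"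
  then obtain w where w: "w \<in> natcomb F" "y = x + w"
    by blast
  from assms obtain s where s: "s \<in> natcomb F" "x = b + s"
    by blast
  from w s have "y = b + (s + w)" "s + w \<in> natcomb F"
    by (simp_all add: add.assoc natcomb_add)
  then show "y \<in> (\<lambda>v. b + v) ` natcomb F"
    by blast
qed

lemma setdim_le: "has_dim_at_most X k \<Longrightarrow> setdim X \<le> int k"
  unfolding setdim_def by (auto intro: Least_le)

lemma setdim_eq:
  "X \<noteq> {} \<Longrightarrow> has_dim_at_most X k \<Longrightarrow> (\<And>j. has_dim_at_most X j \<Longrightarrow> k \<le> j) \<Longrightarrow>
    setdim X = int k"
  unfolding setdim_def by (auto intro: Least_equality)

lemma setdim_less_if_covered:
  assumes "finite I" "\<And>p. p \<in> I \<Longrightarrow> vec.subspace (snd p) \<and> vec.dim (snd p) < d"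
    and "X \<subseteq> (\<Union>p\<in>I. (\<lambda>v. fst p + v) ` snd p)"
  shows "setdim X < int d"
proof (cases "I = {}")
  case True
  then show ?thesis
    using assms(3) by (simp add: setdim_def)
next
  case False
  then have "d \<ge> 1"
    using assms(2) by fastforce
  have "\<forall>p\<in>I. vec.subspace (snd p) \<and> vec.dim (snd p) \<le> d - 1"
    using assms(2) by fastforce
  then have "has_dim_at_most X (d - 1)"
    unfolding has_dim_at_most_iff using assms(1,3) by blast
  then show ?thesis
    using setdim_le \<open>d \<ge> 1\<close> by fastforce
qed

lemma natdim_union_translates_natcomb:
  assumes "finite B" "finite F" "x \<in> (\<Union>b\<in>B. (\<lambda>v. b + v) ` natcomb F)"
  shows "natdim (\<Union>b\<in>B. (\<lambda>v. b + v) ` natcomb F) = int (vec.dim (ratvec ` F))"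
  unfolding natdim_def
proof (rule setdim_eq)
  let ?L = "\<Union>b\<in>B. (\<lambda>v. b + v) ` natcomb F"
  show "ratvec ` ?L \<noteq> {}"
    using assms(3) by blast
  let ?I = "(\<lambda>b. (ratvec b, vec.span (ratvec ` F))) ` B"
  have "ratvec ` ?L \<subseteq> (\<Union>p\<in>?I. (\<lambda>v. fst p + v) ` snd p)"
  proof
    fix r assume "r \<in> ratvec ` ?L"
    then obtain b w where "b \<in> B" "w \<in> natcomb F" "r = ratvec b + ratvec w"
      by (auto simp: ratvec_add)
    then show "r \<in> (\<Union>p\<in>?I. (\<lambda>v. fst p + v) ` snd p)"
      using ratvec_natcomb_in_span by (intro UN_I[of "(ratvec b, vec.span (ratvec ` F))"]) auto
  qed
  then show "has_dim_at_most (ratvec ` ?L) (vec.dim (ratvec ` F))"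
    unfolding has_dim_at_most_iff using assms(1)
    by (intro exI[of _ ?I] conjI) (auto simp: vec.subspace_span vec.dim_span)
  from assms(3) obtain b where "b \<in> B" "x \<in> (\<lambda>v. b + v) ` natcomb F"
    by blast
  then have "(\<lambda>v. x + v) ` natcomb F \<subseteq> ?L"
    using translate_natcomb_subset UN_upper subset_trans by metis
  then show "vec.dim (ratvec ` F) \<le> j" if "has_dim_at_most (ratvec ` ?L) j" for j
    using dim_span_le_if_translate_natcomb_subset[OF assms(2) _ that] by blast
qed

lemma clear_denominators:
  fixes X :: "(rat ^ 'n) set"
  assumes "finite X" "v \<in> vec.span X"
  shows "\<exists>M::nat. M > 0 \<and> (\<exists>z. of_nat M *s v = (\<Sum>x\<in>X. of_int (z x) *s x))"
proof -
  obtain q where v: "v = (\<Sum>x\<in>X. q x *s x)"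
    using assms vec.span_finite by blast
  define num where "num x = fst (quotient_of (q x))" for x
  define den where "den x = snd (quotient_of (q x))" for x
  have den_pos: "den x > 0" for x
    unfolding den_def using quotient_of_denom_pos' by blast
  have q: "q x = of_int (num x) / of_int (den x)" for x
    unfolding num_def den_def by (metis quotient_of_div surjective_pairing)
  define M where "M = nat (\<Prod>x\<in>X. den x)"
  define z where "z x = num x * (\<Prod>y\<in>X - {x}. den y)" for x
  have "of_int (z x) = of_nat M * q x" if "x \<in> X" for x
  proof -
    have "(of_nat M :: rat) = of_int (\<Prod>y\<in>X. den y)"
      unfolding M_def using den_pos by (simp add: prod_pos less_imp_le)
    also have "\<dots> = of_int (den x) * of_int (\<Prod>y\<in>X - {x}. den y)"
      using assms(1) that by (simp add: prod.remove)
    finally have "(of_nat M :: rat) = of_int (den x) * of_int (\<Prod>y\<in>X - {x}. den y)" .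
    then show ?thesis
      unfolding z_def q using den_pos[of x] by (simp add: field_simps)
  qed
  then have "of_nat M *s v = (\<Sum>x\<in>X. of_int (z x) *s x)"
    unfolding v by (simp add: vec_eq_iff sum_distrib_left mult.assoc cong: sum.cong)
  moreover have "M > 0"
    unfolding M_def using den_pos by (simp add: prod_pos)
  ultimately show ?thesis
    by blast
qed

definition absorbs :: "(nat ^ 'n) set \<Rightarrow> (nat ^ 'n) set \<Rightarrow> nat ^ 'n \<Rightarrow> bool" where
  "absorbs S F w \<longleftrightarrow> (\<forall>\<^sub>F K in sequentially.
      \<forall>a. (\<forall>g\<in>S. K \<le> a g) \<longrightarrow> lincomb a F \<in> (\<lambda>v. w + v) ` natcomb F)"

lemma absorbs_zero: "absorbs S F 0"
  by (simp add: absorbs_def)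

lemma absorbs_add:
  assumes "absorbs S F u" "absorbs S F w"
  shows "absorbs S F (u + w)"
proof -
  obtain Ku Kw where
    Ku: "\<And>a. \<forall>g\<in>S. Ku \<le> a g \<Longrightarrow> lincomb a F \<in> (\<lambda>v. u + v) ` natcomb F" and
    Kw: "\<And>a. \<forall>g\<in>S. Kw \<le> a g \<Longrightarrow> lincomb a F \<in> (\<lambda>v. w + v) ` natcomb F"
    using assms unfolding absorbs_def eventually_sequentially by blast
  have "lincomb a F \<in> (\<lambda>v. u + w + v) ` natcomb F" if a: "\<forall>g\<in>S. Ku + Kw \<le> a g" for a
  proof -
    define au where "au h = (if h \<in> S then a h - Kw else a h)" for h
    define aw where "aw h = (if h \<in> S then Kw else 0)" for h
    have "lincomb a F = lincomb au F + lincomb aw F"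
      unfolding lincomb_add[symmetric] using a by (intro lincomb_cong) (auto simp: au_def aw_def)
    moreover obtain s t where "s \<in> natcomb F" "lincomb au F = u + s"
      "t \<in> natcomb F" "lincomb aw F = w + t"
      using Ku[of au] Kw[of aw] a by (force simp: au_def aw_def)
    ultimately have "lincomb a F = u + w + (s + t)" "s + t \<in> natcomb F"
      by (simp_all add: algebra_simps natcomb_add)
    then show ?thesis
      by blast
  qed
  then show ?thesis
    unfolding absorbs_def eventually_sequentially by (meson order.trans)
qed

text \<open>Write \<open>M f = \<Sum>g\<in>S. Z g *s g\<close> with \<open>M > 0\<close> and integers \<open>Z g\<close>. If \<open>a g \<ge> \<bar>Z g\<bar>\<close>
  on \<open>S\<close>, then \<open>lincomb a F = M *s f + lincomb a' F\<close>, where \<open>a'\<close> subtracts \<open>Z\<close> on \<open>S\<close>.\<close>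
lemma absorbs_generator:
  assumes "finite F" "S \<subseteq> F" "vec.span (ratvec ` S) = vec.span (ratvec ` F)" "f \<in> F"
  shows "absorbs S F f"
proof -
  have "ratvec f \<in> vec.span (ratvec ` S)"
    unfolding assms(3) using assms(4) by (intro vec.span_base imageI)
  then obtain M z where M: "M > 0" "of_nat M *s ratvec f = (\<Sum>x\<in>ratvec ` S. of_int (z x) *s x)"
    using clear_denominators[of "ratvec ` S"] finite_subset[OF assms(2,1)] by blast
  define Z where "Z g = z (ratvec g)" for g
  have Mf: "of_nat M *s ratvec f = (\<Sum>g\<in>S. of_int (Z g) *s ratvec g)"
    unfolding M(2) Z_def by (simp add: sum.reindex inj_on_subset[OF inj_ratvec])
  have "lincomb a F \<in> (\<lambda>v. f + v) ` natcomb F" if a: "\<forall>g\<in>S. (\<Sum>g\<in>S. nat \<bar>Z g\<bar>) \<le> a g" for a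
  proof -
    define a' where "a' h = (if h \<in> S then nat (int (a h) - Z h) else a h)" for h
    have "nat \<bar>Z g\<bar> \<le> a g" if "g \<in> S" for g
      using a that finite_subset[OF assms(2,1)] member_le_sum[of g S "\<lambda>g. nat \<bar>Z g\<bar>"]
      by (meson order.trans zero_le)
    then have "Z h \<le> int (a h)" if "h \<in> S" for h
      using that by fastforce
    then have a': "(of_nat (a' h) :: rat) = of_nat (a h) - (if h \<in> S then of_int (Z h) else 0)" for h
      by (auto simp: a'_def of_nat_nat)
    have "(\<Sum>h\<in>F. (if h \<in> S then of_int (Z h) else 0) *s ratvec h) = of_nat M *s ratvec f"
      unfolding Mf using assms(1,2) by (simp add: if_distrib[of "\<lambda>c. c *s _"] sum.If_cases Int_absorb1)
    then have "ratvec (lincomb a F) = ratvec (M *s f + lincomb a' F)"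
      by (simp add: ratvec_lincomb ratvec_add ratvec_scale a' vec.scale_left_diff_distrib sum_subtractf)
    then have "lincomb a F = M *s f + lincomb a' F"
      by (rule injD[OF inj_ratvec])
    moreover have "M *s f = f + (M - 1) *s f"
      using M(1) by (cases M) (simp_all add: vec_eq_iff)
    ultimately have "lincomb a F = f + ((M - 1) *s f + lincomb a' F)"
      by (simp add: add.assoc)
    moreover have "(M - 1) *s f + lincomb a' F \<in> natcomb F"
      using assms(1,4) by (intro natcomb_add natcomb_scale generator_in_natcomb lincomb_in_natcomb)
    ultimately show ?thesis
      by blast
  qed
  then show ?thesis
    unfolding absorbs_def eventually_sequentially by (meson order.trans)
qed

lemma absorbs_natcomb:
  assumes "finite F" "S \<subseteq> F" "vec.span (ratvec ` S) = vec.span (ratvec ` F)" "w \<in> natcomb F"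
  shows "absorbs S F w"
  using assms(1,4)
proof (induction rule: natcomb_induct)
  case zero
  then show ?case by (rule absorbs_zero)
next
  case (add u v)
  then show ?case by (rule absorbs_add)
next
  case (generator f)
  then show ?case using assms(1-3) by (rule absorbs_generator[rotated 3])
qed

lemma directed_translate_shift:
  assumes "(\<lambda>v. b + v) ` natcomb F \<inter> (\<lambda>v. b' + v) ` natcomb F \<noteq> {}"
    and "x \<in> (\<lambda>v. b' + v) ` natcomb F"
  shows "\<exists>u\<in>natcomb F. (\<lambda>v. b + u + v) ` natcomb F \<subseteq> (\<lambda>v. x + v) ` natcomb F"
proof -
  obtain y where y: "y \<in> (\<lambda>v. b + v) ` natcomb F" "y \<in> (\<lambda>v. b' + v) ` natcomb F"
    using assms(1) by blast
  obtain u1 where u1: "u1 \<in> natcomb F" "y = b + u1"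
    using y(1) by blast
  obtain u2 where u2: "u2 \<in> natcomb F" "y = b' + u2"
    using y(2) by blast
  obtain s where s: "s \<in> natcomb F" "x = b' + s"
    using assms(2) by blast
  have "b + (u1 + s) + w \<in> (\<lambda>v. x + v) ` natcomb F" if "w \<in> natcomb F" for w
  proof
    have "b + (u1 + s) + w = (b + u1) + (s + w)"
      by (simp add: add.assoc)
    also have "\<dots> = x + (u2 + w)"
      unfolding s(2) u1(2)[symmetric] u2(2) by (simp add: add_ac)
    finally show "b + (u1 + s) + w = x + (u2 + w)" .
    show "u2 + w \<in> natcomb F"
      using u2(1) that by (rule natcomb_add)
  qed
  moreover have "u1 + s \<in> natcomb F"
    using u1(1) s(1) by (rule natcomb_add)
  ultimately show ?thesis
    by blast
qed

lemma ratvec_translate_lincomb_mem: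
  assumes "finite F" "T \<subseteq> F"
  shows "ratvec (b + lincomb a F)
    \<in> (\<lambda>v. ratvec (b + lincomb (restrict a T) T) + v) ` vec.span (ratvec ` (F - T))"
proof -
  have "lincomb (restrict a T) T = lincomb a T"
    by (rule lincomb_cong) simp
  then have "ratvec (b + lincomb a F) = ratvec (b + lincomb (restrict a T) T) + ratvec (lincomb a (F - T))"
    using lincomb_split[OF assms] by (simp add: ratvec_add add.assoc)
  then show ?thesis
    using ratvec_natcomb_in_span[OF lincomb_in_natcomb] by blast
qed

lemma uniform_absorption_bound:
  assumes "finite B" "finite F" "\<And>b. b \<in> B \<Longrightarrow> U b \<in> natcomb F"
  obtains K where "\<forall>b\<in>B. \<forall>S. S \<subseteq> F \<and> vec.span (ratvec ` S) = vec.span (ratvec ` F) \<longrightarrow>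
    (\<forall>a. (\<forall>g\<in>S. K \<le> a g) \<longrightarrow> lincomb a F \<in> (\<lambda>v. U b + v) ` natcomb F)"
proof -
  let ?\<S> = "{S. S \<subseteq> F \<and> vec.span (ratvec ` S) = vec.span (ratvec ` F)}"
  have "\<forall>\<^sub>F K in sequentially. \<forall>a. (\<forall>g\<in>S. K \<le> a g) \<longrightarrow> lincomb a F \<in> (\<lambda>v. U b + v) ` natcomb F"
    if "b \<in> B" "S \<in> ?\<S>" for b S
    using absorbs_natcomb[OF assms(2) _ _ assms(3)[OF that(1)], of S] that(2)
    unfolding absorbs_def by simp
  moreover have "finite ?\<S>"
    using assms(2) by (simp add: finite_subset[of _ "Pow F"])
  ultimately have "\<forall>\<^sub>F K in sequentially. \<forall>b\<in>B. \<forall>S\<in>?\<S>.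
      \<forall>a. (\<forall>g\<in>S. K \<le> a g) \<longrightarrow> lincomb a F \<in> (\<lambda>v. U b + v) ` natcomb F"
    using assms(1) by (intro eventually_ball_finite ballI) simp_all
  from eventually_happens'[OF sequentially_bot this] show ?thesis
    using that by blast
qed

definition low_dim_translates ::
    "(nat ^ 'n) set \<Rightarrow> (nat ^ 'n) set \<Rightarrow> nat \<Rightarrow> ((rat ^ 'n) \<times> (rat ^ 'n) set) set" where
  "low_dim_translates B F K = (\<Union>b\<in>B.
     \<Union>T\<in>{T. T \<subseteq> F \<and> vec.span (ratvec ` (F - T)) \<noteq> vec.span (ratvec ` F)}.
       (\<lambda>a. (ratvec (b + lincomb a T), vec.span (ratvec ` (F - T)))) ` (T \<rightarrow>\<^sub>E {..<K}))"

lemma finite_low_dim_translates: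
  assumes "finite B" "finite F"
  shows "finite (low_dim_translates B F K)"
proof -
  have "finite {T. T \<subseteq> F \<and> vec.span (ratvec ` (F - T)) \<noteq> vec.span (ratvec ` F)}"
    using assms(2) by (simp add: finite_subset[of _ "Pow F"])
  moreover have "finite (T \<rightarrow>\<^sub>E {..<K})" if "T \<subseteq> F" for T
    using that assms(2) by (intro finite_PiE) (auto simp: finite_subset)
  ultimately show ?thesis
    using assms(1) by (simp add: low_dim_translates_def)
qed

lemma low_dim_translates_dim:
  assumes "p \<in> low_dim_translates B F K"
  shows "vec.subspace (snd p) \<and> vec.dim (snd p) < vec.dim (ratvec ` F)"
proof -
  obtain T where "T \<subseteq> F" "vec.span (ratvec ` (F - T)) \<noteq> vec.span (ratvec ` F)"
    and p: "snd p = vec.span (ratvec ` (F - T))"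
    using assms unfolding low_dim_translates_def by force
  then have "vec.span (ratvec ` (F - T)) \<subset> vec.span (ratvec ` F)"
    by (auto intro!: vec.span_mono)
  then show ?thesis
    unfolding p by (simp add: vec.subspace_span vec.dim_span vec.dim_psubset)
qed

lemma complement_covered_by_low_dim_translates:
  fixes B F :: "(nat ^ 'n) set"
  assumes "finite B" "finite F"
    and directed: "\<forall>b\<in>B. \<forall>b'\<in>B. ((\<lambda>v. b + v) ` natcomb F) \<inter> ((\<lambda>v. b' + v) ` natcomb F) \<noteq> {}"
    and "x \<in> (\<Union>b\<in>B. (\<lambda>v. b + v) ` natcomb F)"
  obtains K where
    "ratvec ` ((\<Union>b\<in>B. (\<lambda>v. b + v) ` natcomb F) - (\<lambda>v. x + v) ` natcomb F)
       \<subseteq> (\<Union>p\<in>low_dim_translates B F K. (\<lambda>v. fst p + v) ` snd p)"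
proof -
  obtain b0 where "b0 \<in> B" "x \<in> (\<lambda>v. b0 + v) ` natcomb F"
    using assms(4) by blast
  then have "\<exists>u\<in>natcomb F. (\<lambda>v. b + u + v) ` natcomb F \<subseteq> (\<lambda>v. x + v) ` natcomb F" if "b \<in> B" for b
    using directed that by (intro directed_translate_shift) auto
  then obtain U where U: "\<And>b. b \<in> B \<Longrightarrow> U b \<in> natcomb F"
    "\<And>b. b \<in> B \<Longrightarrow> (\<lambda>v. b + U b + v) ` natcomb F \<subseteq> (\<lambda>v. x + v) ` natcomb F"
    by metis
  obtain K where K: "\<forall>b\<in>B. \<forall>S. S \<subseteq> F \<and> vec.span (ratvec ` S) = vec.span (ratvec ` F) \<longrightarrow>
      (\<forall>a. (\<forall>g\<in>S. K \<le> a g) \<longrightarrow> lincomb a F \<in> (\<lambda>v. U b + v) ` natcomb F)"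
    by (rule uniform_absorption_bound[of B F U, OF assms(1,2) U(1)])
  show ?thesis
  proof (rule that[of K], rule subsetI)
    fix r assume "r \<in> ratvec ` ((\<Union>b\<in>B. (\<lambda>v. b + v) ` natcomb F) - (\<lambda>v. x + v) ` natcomb F)"
    then obtain b a where b: "b \<in> B" "b + lincomb a F \<notin> (\<lambda>v. x + v) ` natcomb F"
      and r: "r = ratvec (b + lincomb a F)"
      by (auto simp: natcomb_eq_range_lincomb)
    define T where "T = {f \<in> F. a f < K}"
    have "vec.span (ratvec ` (F - T)) \<noteq> vec.span (ratvec ` F)"
    proof
      assume "vec.span (ratvec ` (F - T)) = vec.span (ratvec ` F)"
      moreover have "F - T \<subseteq> F" "\<forall>g\<in>F - T. K \<le> a g"
        by (auto simp: T_def)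
      ultimately have "lincomb a F \<in> (\<lambda>v. U b + v) ` natcomb F"
        using K b(1) by blast
      then have "b + lincomb a F \<in> (\<lambda>v. b + U b + v) ` natcomb F"
        by (auto simp: add.assoc)
      then show False
        using U(2)[OF b(1)] b(2) by blast
    qed
    moreover have "restrict a T \<in> T \<rightarrow>\<^sub>E {..<K}"
      by (auto simp: T_def)
    ultimately have "(ratvec (b + lincomb (restrict a T) T), vec.span (ratvec ` (F - T)))
        \<in> low_dim_translates B F K"
      using b(1) unfolding low_dim_translates_def T_def by blast
    moreover have "r \<in> (\<lambda>v. ratvec (b + lincomb (restrict a T) T) + v) ` vec.span (ratvec ` (F - T))"
      unfolding r using assms(2) by (intro ratvec_translate_lincomb_mem) (auto simp: T_def)
    ultimately show "r \<in> (\<Union>p\<in>low_dim_translates B F K. (\<lambda>v. fst p + v) ` snd p)"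
      by force
  qed
qed

theorem mainTheorem17:
  fixes B F :: "(nat ^ 'n) set" and x :: "nat ^ 'n"
  assumes "finite B" and "finite F"
    and "\<forall>b\<in>B. \<forall>b'\<in>B. ((\<lambda>v. b + v) ` natcomb F) \<inter> ((\<lambda>v. b' + v) ` natcomb F) \<noteq> {}"
    and "x \<in> (\<Union>b\<in>B. (\<lambda>v. b + v) ` natcomb F)"
  shows "natdim ((\<Union>b\<in>B. (\<lambda>v. b + v) ` natcomb F) - (\<lambda>v. x + v) ` natcomb F)
         < natdim (\<Union>b\<in>B. (\<lambda>v. b + v) ` natcomb F)"
proof -
  let ?L = "\<Union>b\<in>B. (\<lambda>v. b + v) ` natcomb F"
  obtain K where cover: "ratvec ` (?L - (\<lambda>v. x + v) ` natcomb F)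
      \<subseteq> (\<Union>p\<in>low_dim_translates B F K. (\<lambda>v. fst p + v) ` snd p)"
    by (rule complement_covered_by_low_dim_translates[OF assms])
  have "natdim (?L - (\<lambda>v. x + v) ` natcomb F) < int (vec.dim (ratvec ` F))"
    unfolding natdim_def using finite_low_dim_translates[OF assms(1,2)] low_dim_translates_dim cover
    by (rule setdim_less_if_covered)
  also have "\<dots> = natdim ?L"
    using natdim_union_translates_natcomb[OF assms(1,2,4)] by simp
  finally show ?thesis .
qed

end
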